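(* Let $m\geq4$ be an integer and let $G$ be an $m$-free digraph. Then for every $v\in V(G)$ and every integer $k$ with $1\leq k\leq m-3$: $$p_k(v)=|E(N^+_{k+1}(v),N^+_{k+2}(v))|,\qquad q_k(v)\leq |\bar E(N^-_{k+1}(v),N^+_1(v))|,\qquad r_k(v)\leq|\bar E(N^-_1(v),N^-_{k+2}(v))|,$$ $$p'_k(v)\leq|\bar E(N^+_1(v),N^+_{k+2}(v))|,\qquad q'_k(v)\leq|\bar E(N^+_{k+1}(v),N^-_1(v))|,\qquad r'_k(v)=|E(N^-_{k+2}(v),N^-_{k+1}(v))|.$$
   Context: All digraphs are finite, without loops and without parallel edges. A digraph is $m$-free if it has no directed cycle of length at most $m$. For a vertex $v$ and $i\geq 0$, $N_i^+(v)$ is the set of vertices $u$ such that the shortest directed path from $v$ to $u$ has length exactly $i$, and $N_i^-(v)$ is the set of vertices $u$ such that the shortest directed path from $u$ to $v$ has length exactly $i$. For $A,B\subseteq V(G)$, $E(A,B)$ is the set of edges $(a,b)$ with $a\in A$, $b\in B$, and $\bar E(A,B)$ is the set of pairs $(a,b)\in A\times B$ with $a\neq b$ such that neither $(a,b)$ nor $(b,a)$ is an edge. A directed path $(v_0,\dots,v_k)$ consists of distinct vertices with $(v_i,v_{i+1})$ an edge for each $i$; its length is $k$. It is induced if every edge of $G$ with both ends in $\{v_0,\dots,v_k\}$ is one of the edges $(v_i,v_{i+1})$; it is a shortest induced directed path if it is induced and $v_k\in N_k^+(v_0)$. Let $\mathscr{P}(G)$ be the set of shortest induced directed paths of $G$.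 For an integer $k\geq1$ and $v\in V(G)$: $P_k(v)$ (resp. $Q_k(v)$, $R_k(v)$) is the set of triples $(x,y,z)$ of vertices for which there exist vertices $w_1,\dots,w_k$ with $(x,w_1,\dots,w_k,y,z)\in\mathscr{P}(G)$ and $x=v$ (resp. $y=v$, $z=v$). $P'_k(v)$ (resp. $Q'_k(v)$, $R'_k(v)$) is the set of triples $(x,y,z)$ for which there exist $w_1,\dots,w_k$ with $(x,y,w_1,\dots,w_k,z)\in\mathscr{P}(G)$ and $x=v$ (resp. $y=v$, $z=v$). Lowercase letters denote cardinalities: $p_k(v)=|P_k(v)|$, etc. *)

theory Defs
  imports Main
begin

definition digraph :: "'a set \<Rightarrow> ('a \<times> 'a) set \<Rightarrow> bool" where
  "digraph V E \<longleftrightarrow> finite V \<and> E \<subseteq> V \<times> V \<and> (\<forall>x. (x, x) \<notin> E)"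

text \<open>A directed path given as its vertex list (v_0,...,v_k): distinct vertices of V,
  consecutive ones joined by edges. Its length is length p - 1.\<close>
definition dpath :: "'a set \<Rightarrow> ('a \<times> 'a) set \<Rightarrow> 'a list \<Rightarrow> bool" where
  "dpath V E p \<longleftrightarrow> p \<noteq> [] \<and> set p \<subseteq> V \<and> distinct p \<and>
     (\<forall>i. Suc i < length p \<longrightarrow> (p ! i, p ! Suc i) \<in> E)"

definition dcycle :: "'a set \<Rightarrow> ('a \<times> 'a) set \<Rightarrow> 'a list \<Rightarrow> bool" where
  "dcycle V E c \<longleftrightarrow> dpath V E c \<and> (last c, hd c) \<in> E"

definition m_free :: "nat \<Rightarrow> 'a set \<Rightarrow> ('a \<times> 'a) set \<Rightarrow> bool" where
  "m_free m V E \<longleftrightarrow> \<not> (\<exists>c. dcycle V E c \<and> length c \<le> m)"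

definition has_path :: "'a set \<Rightarrow> ('a \<times> 'a) set \<Rightarrow> 'a \<Rightarrow> 'a \<Rightarrow> nat \<Rightarrow> bool" where
  "has_path V E u w i \<longleftrightarrow> (\<exists>p. dpath V E p \<and> hd p = u \<and> last p = w \<and> length p = Suc i)"

definition Nout :: "'a set \<Rightarrow> ('a \<times> 'a) set \<Rightarrow> nat \<Rightarrow> 'a \<Rightarrow> 'a set" where
  "Nout V E i v = {u. has_path V E v u i \<and> (\<forall>j<i. \<not> has_path V E v u j)}"

definition Nin :: "'a set \<Rightarrow> ('a \<times> 'a) set \<Rightarrow> nat \<Rightarrow> 'a \<Rightarrow> 'a set" where
  "Nin V E i v = {u. has_path V E u v i \<and> (\<forall>j<i. \<not> has_path V E u v j)}"

definition Eset :: "('a \<times> 'a) set \<Rightarrow> 'a set \<Rightarrow> 'a set \<Rightarrow> ('a \<times> 'a) set" where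
  "Eset E A B = {(a, b). (a, b) \<in> E \<and> a \<in> A \<and> b \<in> B}"

definition Ebar :: "('a \<times> 'a) set \<Rightarrow> 'a set \<Rightarrow> 'a set \<Rightarrow> ('a \<times> 'a) set" where
  "Ebar E A B = {(a, b). a \<in> A \<and> b \<in> B \<and> a \<noteq> b \<and> (a, b) \<notin> E \<and> (b, a) \<notin> E}"

definition induced_path :: "'a set \<Rightarrow> ('a \<times> 'a) set \<Rightarrow> 'a list \<Rightarrow> bool" where
  "induced_path V E p \<longleftrightarrow> dpath V E p \<and>
     (\<forall>i j. i < length p \<longrightarrow> j < length p \<longrightarrow> (p ! i, p ! j) \<in> E \<longrightarrow> j = Suc i)"

definition shortest_induced_path :: "'a set \<Rightarrow> ('a \<times> 'a) set \<Rightarrow> 'a list \<Rightarrow> bool" where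
  "shortest_induced_path V E p \<longleftrightarrow> induced_path V E p \<and>
     last p \<in> Nout V E (length p - 1) (hd p)"

definition Pk :: "'a set \<Rightarrow> ('a \<times> 'a) set \<Rightarrow> nat \<Rightarrow> 'a \<Rightarrow> ('a \<times> 'a \<times> 'a) set" where
  "Pk V E k v = {(x, y, z). (\<exists>ws. length ws = k \<and> shortest_induced_path V E (x # ws @ [y, z])) \<and> x = v}"
definition Qk :: "'a set \<Rightarrow> ('a \<times> 'a) set \<Rightarrow> nat \<Rightarrow> 'a \<Rightarrow> ('a \<times> 'a \<times> 'a) set" where
  "Qk V E k v = {(x, y, z). (\<exists>ws. length ws = k \<and> shortest_induced_path V E (x # ws @ [y, z])) \<and> y = v}"
definition Rk :: "'a set \<Rightarrow> ('a \<times> 'a) set \<Rightarrow> nat \<Rightarrow> 'a \<Rightarrow> ('a \<times> 'a \<times> 'a) set" where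
  "Rk V E k v = {(x, y, z). (\<exists>ws. length ws = k \<and> shortest_induced_path V E (x # ws @ [y, z])) \<and> z = v}"
definition Pk' :: "'a set \<Rightarrow> ('a \<times> 'a) set \<Rightarrow> nat \<Rightarrow> 'a \<Rightarrow> ('a \<times> 'a \<times> 'a) set" where
  "Pk' V E k v = {(x, y, z). (\<exists>ws. length ws = k \<and> shortest_induced_path V E (x # y # ws @ [z])) \<and> x = v}"
definition Qk' :: "'a set \<Rightarrow> ('a \<times> 'a) set \<Rightarrow> nat \<Rightarrow> 'a \<Rightarrow> ('a \<times> 'a \<times> 'a) set" where
  "Qk' V E k v = {(x, y, z). (\<exists>ws. length ws = k \<and> shortest_induced_path V E (x # y # ws @ [z])) \<and> y = v}"
definition Rk' :: "'a set \<Rightarrow> ('a \<times> 'a) set \<Rightarrow> nat \<Rightarrow> 'a \<Rightarrow> ('a \<times> 'a \<times> 'a) set" where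
  "Rk' V E k v = {(x, y, z). (\<exists>ws. length ws = k \<and> shortest_induced_path V E (x # y # ws @ [z])) \<and> z = v}"

end

theory Submission
  imports Defs
begin

(* The argument has three ingredients.
   (1) Distances: "has_path" satisfies a triangle inequality, so every subpath of a
       geodesic (a path whose endpoints are at distance equal to its length) is again
       a geodesic between its endpoints.
   (2) In an m-free digraph every geodesic with at most m vertices is induced: a chord
       going forward would shorten the path, a chord going backward closes a short cycle.
   (3) Hence for a path in P(G) the distances between its vertices are exactly the
       differences of their positions and non-consecutive vertices are non-adjacent.
   Each of the six triples (x,y,z) is then determined by two of its vertices, and this
   pair lies in the indicated set E(A,B) or Ebar(A,B); this gives the four inequalities.
   For the two equalities the projection is also onto: a geodesic from v to y extended
   by an edge yz with z one step further from v is a geodesic with k+3 <= m vertices,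
   hence by (2) a shortest induced path (and dually for paths ending in v). *)

subsection \<open>Directed paths and the distance relation\<close>

lemma dpath_take: "dpath V E p \<Longrightarrow> 0 < n \<Longrightarrow> dpath V E (take n p)"
  unfolding dpath_def by (auto dest: in_set_takeD)

lemma dpath_drop:
  assumes p: "dpath V E p" and n: "n < length p"
  shows "dpath V E (drop n p)"
  unfolding dpath_def
proof (intro conjI allI impI)
  show "drop n p \<noteq> []" "set (drop n p) \<subseteq> V" "distinct (drop n p)"
    using p n unfolding dpath_def by (auto dest: in_set_dropD)
  fix i assume "Suc i < length (drop n p)"
  then have "(p ! (n + i), p ! Suc (n + i)) \<in> E" using p unfolding dpath_def by simp
  then show "(drop n p ! i, drop n p ! Suc i) \<in> E" using n by simp
qed

lemma has_path_subpath:
  assumes "dpath V E p" "i \<le> j" "j < length p"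
  shows "has_path V E (p!i) (p!j) (j - i)"
proof -
  let ?q = "drop i (take (Suc j) p)"
  have "dpath V E (take (Suc j) p)" using dpath_take[OF assms(1)] by simp
  moreover have "i < length (take (Suc j) p)" using assms by simp
  ultimately have "dpath V E ?q" by (rule dpath_drop)
  moreover have "hd ?q = p!i" "last ?q = p!j" "length ?q = Suc (j - i)"
    using assms by (simp_all add: hd_drop_conv_nth last_conv_nth)
  ultimately show ?thesis unfolding has_path_def by blast
qed

lemma has_path_in_V: "has_path V E u w i \<Longrightarrow> u \<in> V \<and> w \<in> V"
  unfolding has_path_def dpath_def by (metis hd_in_set last_in_set subsetD)

lemma has_path_0: "has_path V E w z 0 \<Longrightarrow> w = z"
  unfolding has_path_def by (metis Suc_length_conv hd_Cons_tl last_ConsL length_0_conv list.sel(1))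

lemma has_path_edge: "(a, b) \<in> E \<Longrightarrow> digraph V E \<Longrightarrow> has_path V E a b 1"
  unfolding has_path_def digraph_def dpath_def
  by (rule exI[of _ "[a, b]"]) (auto simp: nth_Cons split: nat.splits)

lemma has_path_Suc_split:
  assumes "has_path V E w z (Suc b)"
  obtains w' where "(w, w') \<in> E" "has_path V E w' z b"
proof -
  obtain p where p: "dpath V E p" "hd p = w" "last p = z" "length p = Suc (Suc b)"
    using assms unfolding has_path_def by blast
  have "p!0 = w" using p by (cases p) auto
  moreover have "p!Suc b = z" using p last_conv_nth[of p] by (cases p) auto
  moreover have "(p!0, p!1) \<in> E" using p unfolding dpath_def by auto
  moreover have "has_path V E (p!1) (p!Suc b) b" using has_path_subpath[OF p(1), of 1 "Suc b"] p by simp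
  ultimately show ?thesis using that by auto
qed

lemma dpath_snoc:
  assumes p: "dpath V E p" and z: "z \<notin> set p" "z \<in> V" "(last p, z) \<in> E"
  shows "dpath V E (p @ [z])"
  unfolding dpath_def
proof (intro conjI allI impI)
  show "p @ [z] \<noteq> []" "set (p @ [z]) \<subseteq> V" "distinct (p @ [z])"
    using p z unfolding dpath_def by auto
  fix i assume i: "Suc i < length (p @ [z])"
  show "((p @ [z]) ! i, (p @ [z]) ! Suc i) \<in> E"
  proof (cases "Suc i < length p")
    case True
    then show ?thesis using p unfolding dpath_def by (simp add: nth_append)
  next
    case False
    then have "i = length p - 1" "p \<noteq> []" using i by auto
    then show ?thesis using z(3) by (simp add: nth_append last_conv_nth)
  qed
qed

lemma dpath_cons:
  assumes p: "dpath V E p" and x: "x \<notin> set p" "x \<in> V" "(x, hd p) \<in> E"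
  shows "dpath V E (x # p)"
  unfolding dpath_def
proof (intro conjI allI impI)
  show "x # p \<noteq> []" "set (x # p) \<subseteq> V" "distinct (x # p)"
    using p x unfolding dpath_def by auto
  fix i assume i: "Suc i < length (x # p)"
  show "((x # p) ! i, (x # p) ! Suc i) \<in> E"
  proof (cases i)
    case 0
    then show ?thesis using x(3) p unfolding dpath_def by (simp add: hd_conv_nth)
  next
    case (Suc i')
    then show ?thesis using i p unfolding dpath_def by simp
  qed
qed

text \<open>Appending an edge increases the distance by at most one: either the new vertex
  already lies on the path (cut the path there) or the path can be extended.\<close>
lemma has_path_snoc_edge:
  assumes "has_path V E u w a" "(w, z) \<in> E" "digraph V E"
  shows "\<exists>c \<le> Suc a. has_path V E u z c"
proof -
  obtain p where p: "dpath V E p" "hd p = u" "last p = w" "length p = Suc a"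
    using assms unfolding has_path_def by blast
  show ?thesis
  proof (cases "z \<in> set p")
    case True
    then obtain j where j: "j < length p" "p!j = z" by (metis in_set_conv_nth)
    have "p!0 = u" using p by (cases p) auto
    then have "has_path V E u z j" using has_path_subpath[OF p(1), of 0 j] j by simp
    then show ?thesis using j p by (intro exI[of _ j]) auto
  next
    case False
    have "z \<in> V" using assms(2,3) unfolding digraph_def by auto
    then have "dpath V E (p @ [z])" using dpath_snoc[OF p(1) False] p(3) assms(2) by simp
    moreover have "hd (p @ [z]) = u" using p by (cases p) auto
    ultimately have "has_path V E u z (Suc a)" unfolding has_path_def using p by force
    then show ?thesis by blast
  qed
qed

lemma has_path_triangle:
  assumes "has_path V E w z b" "has_path V E u w a" "digraph V E"
  shows "\<exists>c \<le> a + b. has_path V E u z c"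
  using assms
proof (induction b arbitrary: w a)
  case 0
  then show ?case using has_path_0 by fastforce
next
  case (Suc b)
  obtain w' where w': "(w, w') \<in> E" "has_path V E w' z b"
    using has_path_Suc_split[OF Suc.prems(1)] by blast
  obtain c' where c': "c' \<le> Suc a" "has_path V E u w' c'"
    using has_path_snoc_edge[OF Suc.prems(2) w'(1) Suc.prems(3)] by blast
  obtain c where "c \<le> c' + b" "has_path V E u z c"
    using Suc.IH[OF w'(2) c'(2) Suc.prems(3)] by blast
  then show ?case using c' by (intro exI[of _ c]) auto
qed

lemma Nin_iff_Nout: "u \<in> Nin V E i w \<longleftrightarrow> w \<in> Nout V E i u"
  unfolding Nin_def Nout_def by simp

lemma Nout_subset: "Nout V E i u \<subseteq> V"
  unfolding Nout_def using has_path_in_V by fast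

lemma Nin_subset: "Nin V E i u \<subseteq> V"
  unfolding Nin_def using has_path_in_V by fast

subsection \<open>Geodesics\<close>

definition geodesic :: "'a set \<Rightarrow> ('a \<times> 'a) set \<Rightarrow> 'a list \<Rightarrow> bool" where
  "geodesic V E p \<longleftrightarrow> dpath V E p \<and> last p \<in> Nout V E (length p - 1) (hd p)"

lemma shortest_induced_path_geodesic:
  "shortest_induced_path V E p \<longleftrightarrow> induced_path V E p \<and> geodesic V E p"
  unfolding shortest_induced_path_def geodesic_def induced_path_def by blast

text \<open>Along a geodesic, the distance between two vertices is the difference of their
  positions: a shortcut between them would, by the triangle inequality, shorten the
  whole geodesic.\<close>
lemma geodesic_distance:
  assumes P: "geodesic V E P" and g: "digraph V E" and ij: "i \<le> j" "j < length P"
  shows "P!j \<in> Nout V E (j - i) (P!i)"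
proof -
  have dp: "dpath V E P" and sh: "P!(length P - 1) \<in> Nout V E (length P - 1) (P!0)"
    using P unfolding geodesic_def dpath_def by (auto simp: hd_conv_nth last_conv_nth)
  have "\<not> has_path V E (P!i) (P!j) c" if c: "c < j - i" for c
  proof
    assume h: "has_path V E (P!i) (P!j) c"
    have "has_path V E (P!0) (P!i) i" using has_path_subpath[OF dp, of 0 i] ij by simp
    then obtain c1 where c1: "c1 \<le> i + c" "has_path V E (P!0) (P!j) c1"
      using has_path_triangle[OF h _ g] by blast
    have "has_path V E (P!j) (P!(length P - 1)) (length P - 1 - j)"
      using has_path_subpath[OF dp, of j "length P - 1"] ij by simp
    then obtain c2 where c2: "c2 \<le> c1 + (length P - 1 - j)" "has_path V E (P!0) (P!(length P - 1)) c2"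
      using has_path_triangle[OF _ c1(2) g] by blast
    have "c2 < length P - 1" using c1 c2 c ij by linarith
    then show False using sh c2(2) unfolding Nout_def by blast
  qed
  then show ?thesis using has_path_subpath[OF dp ij] unfolding Nout_def by auto
qed

text \<open>In an m-free digraph a geodesic with at most m vertices is induced: a forward
  chord contradicts the distances along the geodesic, a backward chord closes a
  directed cycle of length at most m.\<close>
lemma geodesic_induced:
  assumes g: "digraph V E" and mf: "m_free m V E" and P: "geodesic V E P"
    and len: "length P \<le> m"
  shows "induced_path V E P"
  unfolding induced_path_def
proof (intro conjI allI impI)
  show dp: "dpath V E P" using P unfolding geodesic_def by blast
  fix i j assume i: "i < length P" and j: "j < length P" and e: "(P!i, P!j) \<in> E"
  consider "i = j" | "i < j" | "j < i" by linarith
  then show "j = Suc i"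
  proof cases
    case 1
    then show ?thesis using e g unfolding digraph_def by auto
  next
    case 2
    have "P!j \<in> Nout V E (j - i) (P!i)" using geodesic_distance[OF P g, of i j] 2 j by simp
    moreover have "has_path V E (P!i) (P!j) 1" using has_path_edge[OF e g] .
    ultimately have "\<not> 1 < j - i" unfolding Nout_def by auto
    then show ?thesis using 2 by linarith
  next
    case 3
    obtain c where c: "dpath V E c" "hd c = P!j" "last c = P!i" "length c = Suc (i - j)"
      using has_path_subpath[OF dp, of j i] 3 i unfolding has_path_def by auto
    then have "dcycle V E c" using e unfolding dcycle_def by simp
    moreover have "length c \<le> m" using c i len 3 by linarith
    ultimately show ?thesis using mf unfolding m_free_def by blast
  qed
qed

text \<open>A path from v to y of length a, extended by an edge to a vertex z at distance
  a + 1 from v, is a geodesic (z cannot already lie on the path, being too far from v).\<close>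
lemma geodesic_snoc:
  assumes g: "digraph V E" and p: "dpath V E p" "hd p = v" "last p = y"
    and e: "(y, z) \<in> E" and z: "z \<in> Nout V E (length p) v"
  shows "geodesic V E (p @ [z])"
proof -
  have "z \<notin> set p"
  proof
    assume "z \<in> set p"
    then obtain j where j: "j < length p" "p!j = z" by (metis in_set_conv_nth)
    have "p!0 = v" using p unfolding dpath_def by (simp add: hd_conv_nth)
    then have "has_path V E v z j" using has_path_subpath[OF p(1), of 0 j] j by simp
    then show False using z j unfolding Nout_def by auto
  qed
  moreover have "z \<in> V" using e g unfolding digraph_def by auto
  ultimately have "dpath V E (p @ [z])" using dpath_snoc[OF p(1)] p(3) e by simp
  moreover have "hd (p @ [z]) = v" using p unfolding dpath_def by simp
  ultimately show ?thesis using z unfolding geodesic_def by simp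
qed

lemma geodesic_cons:
  assumes g: "digraph V E" and p: "dpath V E p" "hd p = y" "last p = v"
    and e: "(x, y) \<in> E" and x: "v \<in> Nout V E (length p) x"
  shows "geodesic V E (x # p)"
proof -
  have "x \<notin> set p"
  proof
    assume "x \<in> set p"
    then obtain j where j: "j < length p" "p!j = x" by (metis in_set_conv_nth)
    have "p!(length p - 1) = v" using p last_conv_nth[of p] unfolding dpath_def by simp
    then have "has_path V E x v (length p - 1 - j)"
      using has_path_subpath[OF p(1), of j "length p - 1"] j by simp
    then show False using x j unfolding Nout_def by auto
  qed
  moreover have "x \<in> V" using e g unfolding digraph_def by auto
  ultimately have "dpath V E (x # p)" using dpath_cons[OF p(1)] p(2) e by simp
  moreover have "last (x # p) = v" using p unfolding dpath_def by simp
  ultimately show ?thesis using x unfolding geodesic_def by simp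
qed

subsection \<open>Shortest induced paths\<close>

definition nonadjacent :: "('a \<times> 'a) set \<Rightarrow> 'a \<Rightarrow> 'a \<Rightarrow> bool" where
  "nonadjacent E a b \<longleftrightarrow> a \<noteq> b \<and> (a, b) \<notin> E \<and> (b, a) \<notin> E"

lemma nonadjacent_sym: "nonadjacent E a b \<Longrightarrow> nonadjacent E b a"
  unfolding nonadjacent_def by blast

lemma Ebar_iff: "(a, b) \<in> Ebar E A B \<longleftrightarrow> a \<in> A \<and> b \<in> B \<and> nonadjacent E a b"
  unfolding Ebar_def nonadjacent_def by blast

lemma finite_Ebar: "digraph V E \<Longrightarrow> A \<subseteq> V \<Longrightarrow> B \<subseteq> V \<Longrightarrow> finite (Ebar E A B)"
  unfolding Ebar_def digraph_def by (rule finite_subset[of _ "V \<times> V"]) auto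

lemma sip_distance:
  "shortest_induced_path V E P \<Longrightarrow> digraph V E \<Longrightarrow> i \<le> j \<Longrightarrow> j < length P
    \<Longrightarrow> P!j \<in> Nout V E (j - i) (P!i)"
  unfolding shortest_induced_path_geodesic using geodesic_distance by blast

lemma sip_nonadjacent:
  assumes s: "shortest_induced_path V E P" and ij: "Suc i < j" "j < length P"
  shows "nonadjacent E (P!i) (P!j)"
proof -
  have chords: "\<And>a b. a < length P \<Longrightarrow> b < length P \<Longrightarrow> (P!a, P!b) \<in> E \<Longrightarrow> b = Suc a"
    and "distinct P" using s unfolding shortest_induced_path_def induced_path_def dpath_def by blast+
  then have "P!i \<noteq> P!j" using ij by (simp add: nth_eq_iff_index_eq)
  moreover have "(P!i, P!j) \<notin> E" "(P!j, P!i) \<notin> E" using chords[of i j] chords[of j i] ij by auto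
  ultimately show ?thesis unfolding nonadjacent_def by blast
qed

lemma sip_edge: "shortest_induced_path V E P \<Longrightarrow> Suc i < length P \<Longrightarrow> (P!i, P!Suc i) \<in> E"
  unfolding shortest_induced_path_def induced_path_def dpath_def by blast

lemma sip_tail_triple:
  assumes s: "shortest_induced_path V E (x # ws @ [y, z])" and l: "length ws = k"
    and g: "digraph V E"
  shows "y \<in> Nout V E (k+1) x" "z \<in> Nout V E (k+2) x" "z \<in> Nout V E 1 y" "(y, z) \<in> E"
    "nonadjacent E x z" "1 \<le> k \<Longrightarrow> nonadjacent E x y"
proof -
  let ?P = "x # ws @ [y, z]"
  have len: "length ?P = k + 3" using l by simp
  have pos: "?P!0 = x" "?P!(k+1) = y" "?P!(k+2) = z" using l by (simp_all add: nth_append)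
  show "y \<in> Nout V E (k+1) x" using sip_distance[OF s g, of 0 "k+1"] len pos by simp
  show "z \<in> Nout V E (k+2) x" using sip_distance[OF s g, of 0 "k+2"] len pos by simp
  show "z \<in> Nout V E 1 y" using sip_distance[OF s g, of "k+1" "k+2"] len pos by simp
  show "(y, z) \<in> E" using sip_edge[OF s, of "k+1"] len pos by simp
  show "nonadjacent E x z" using sip_nonadjacent[OF s, of 0 "k+2"] len pos by simp
  show "1 \<le> k \<Longrightarrow> nonadjacent E x y" using sip_nonadjacent[OF s, of 0 "k+1"] len pos by simp
qed

lemma sip_head_triple:
  assumes s: "shortest_induced_path V E (x # y # ws @ [z])" and l: "length ws = k"
    and g: "digraph V E"
  shows "y \<in> Nout V E 1 x" "z \<in> Nout V E (k+2) x" "z \<in> Nout V E (k+1) y" "(x, y) \<in> E"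
    "nonadjacent E x z" "1 \<le> k \<Longrightarrow> nonadjacent E y z"
proof -
  let ?P = "x # y # ws @ [z]"
  have len: "length ?P = k + 3" using l by simp
  have pos: "?P!0 = x" "?P!1 = y" "?P!(k+2) = z" using l by (simp_all add: nth_append)
  show "y \<in> Nout V E 1 x" using sip_distance[OF s g, of 0 1] len pos by simp
  show "z \<in> Nout V E (k+2) x" using sip_distance[OF s g, of 0 "k+2"] len pos by simp
  show "z \<in> Nout V E (k+1) y" using sip_distance[OF s g, of 1 "k+2"] len pos by simp
  show "(x, y) \<in> E" using sip_edge[OF s, of 0] len pos by simp
  show "nonadjacent E x z" using sip_nonadjacent[OF s, of 0 "k+2"] len pos by simp
  show "1 \<le> k \<Longrightarrow> nonadjacent E y z" using sip_nonadjacent[OF s, of 1 "k+2"] len pos by simp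
qed

lemma list_split_ends:
  assumes "length p = Suc (Suc k)"
  obtains ws where "length ws = k" "p = hd p # ws @ [last p]"
proof (cases p)
  case Nil
  then show ?thesis using assms by simp
next
  case (Cons a q)
  then have "q \<noteq> []" "length (butlast q) = k" using assms by auto
  then show ?thesis using that[of "butlast q"] Cons by simp
qed

lemma sip_extend_out:
  assumes g: "digraph V E" and mf: "m_free m V E" and km: "k + 3 \<le> m"
    and y: "y \<in> Nout V E (k+1) v" and z: "z \<in> Nout V E (k+2) v" and e: "(y, z) \<in> E"
  obtains ws where "length ws = k" "shortest_induced_path V E (v # ws @ [y, z])"
proof -
  obtain p where p: "dpath V E p" "hd p = v" "last p = y" "length p = Suc (Suc k)"
    using y unfolding Nout_def has_path_def by auto
  have "geodesic V E (p @ [z])" using geodesic_snoc[OF g p(1-3) e] z p(4) by simp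
  then have "shortest_induced_path V E (p @ [z])"
    using geodesic_induced[OF g mf] km p(4) unfolding shortest_induced_path_geodesic by simp
  moreover obtain ws where "length ws = k" "p = v # ws @ [y]"
    using list_split_ends[OF p(4)] p(2,3) by metis
  ultimately show ?thesis using that by simp
qed

lemma sip_extend_in:
  assumes g: "digraph V E" and mf: "m_free m V E" and km: "k + 3 \<le> m"
    and x: "x \<in> Nin V E (k+2) v" and y: "y \<in> Nin V E (k+1) v" and e: "(x, y) \<in> E"
  obtains ws where "length ws = k" "shortest_induced_path V E (x # y # ws @ [v])"
proof -
  obtain p where p: "dpath V E p" "hd p = y" "last p = v" "length p = Suc (Suc k)"
    using y unfolding Nin_def has_path_def by auto
  have "geodesic V E (x # p)" using geodesic_cons[OF g p(1-3) e] x p(4) Nin_iff_Nout by fastforce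
  then have "shortest_induced_path V E (x # p)"
    using geodesic_induced[OF g mf] km p(4) unfolding shortest_induced_path_geodesic by simp
  moreover obtain ws where "length ws = k" "p = y # ws @ [v]"
    using list_split_ends[OF p(4)] p(2,3) by metis
  ultimately show ?thesis using that by simp
qed

subsection \<open>The six counts\<close>

lemma card_Pk:
  assumes g: "digraph V E" and mf: "m_free m V E" and km: "k + 3 \<le> m"
  shows "card (Pk V E k v) = card (Eset E (Nout V E (k+1) v) (Nout V E (k+2) v))"
proof -
  let ?f = "\<lambda>(x::'a, y::'a, z::'a). (y, z)"
  have "?f ` Pk V E k v = Eset E (Nout V E (k+1) v) (Nout V E (k+2) v)"
  proof (intro equalityI subsetI)
    fix t assume "t \<in> ?f ` Pk V E k v"
    then obtain y z ws where t: "t = (y, z)" and l: "length ws = k" and s: "shortest_induced_path V E (v # ws @ [y, z])"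
      unfolding Pk_def by auto
    show "t \<in> Eset E (Nout V E (k+1) v) (Nout V E (k+2) v)"
      using t sip_tail_triple[OF s l g] unfolding Eset_def by simp
  next
    fix t assume "t \<in> Eset E (Nout V E (k+1) v) (Nout V E (k+2) v)"
    then obtain y z where t: "t = (y, z)" "(y, z) \<in> E" "y \<in> Nout V E (k+1) v" "z \<in> Nout V E (k+2) v"
      unfolding Eset_def by auto
    obtain ws where "length ws = k" "shortest_induced_path V E (v # ws @ [y, z])"
      using sip_extend_out[OF g mf km t(3,4,2)] .
    then have "(v, y, z) \<in> Pk V E k v" unfolding Pk_def by auto
    then show "t \<in> ?f ` Pk V E k v" using t(1) by force
  qed
  moreover have "inj_on ?f (Pk V E k v)" unfolding inj_on_def Pk_def by auto
  ultimately show ?thesis by (metis card_image)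
qed

lemma card_Rk':
  assumes g: "digraph V E" and mf: "m_free m V E" and km: "k + 3 \<le> m"
  shows "card (Rk' V E k v) = card (Eset E (Nin V E (k+2) v) (Nin V E (k+1) v))"
proof -
  let ?f = "\<lambda>(x::'a, y::'a, z::'a). (x, y)"
  have "?f ` Rk' V E k v = Eset E (Nin V E (k+2) v) (Nin V E (k+1) v)"
  proof (intro equalityI subsetI)
    fix t assume "t \<in> ?f ` Rk' V E k v"
    then obtain x y ws where t: "t = (x, y)" and l: "length ws = k" and s: "shortest_induced_path V E (x # y # ws @ [v])"
      unfolding Rk'_def by auto
    show "t \<in> Eset E (Nin V E (k+2) v) (Nin V E (k+1) v)"
      using t sip_head_triple[OF s l g] unfolding Eset_def Nin_iff_Nout by simp
  next
    fix t assume "t \<in> Eset E (Nin V E (k+2) v) (Nin V E (k+1) v)"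
    then obtain x y where t: "t = (x, y)" "(x, y) \<in> E" "x \<in> Nin V E (k+2) v" "y \<in> Nin V E (k+1) v"
      unfolding Eset_def by auto
    obtain ws where "length ws = k" "shortest_induced_path V E (x # y # ws @ [v])"
      using sip_extend_in[OF g mf km t(3,4,2)] .
    then have "(x, y, v) \<in> Rk' V E k v" unfolding Rk'_def by auto
    then show "t \<in> ?f ` Rk' V E k v" using t(1) by force
  qed
  moreover have "inj_on ?f (Rk' V E k v)" unfolding inj_on_def Rk'_def by auto
  ultimately show ?thesis by (metis card_image)
qed

text \<open>The four inequalities: the indicated pair of a triple determines it (the third vertex
  is v) and is nonadjacent by inducedness.\<close>
lemma card_Qk:
  assumes g: "digraph V E"
  shows "card (Qk V E k v) \<le> card (Ebar E (Nin V E (k+1) v) (Nout V E 1 v))"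
proof (rule card_inj_on_le[where f = "\<lambda>(x, y, z). (x, z)"])
  show "inj_on (\<lambda>(x, y, z). (x, z)) (Qk V E k v)" unfolding inj_on_def Qk_def by auto
  show "finite (Ebar E (Nin V E (k+1) v) (Nout V E 1 v))"
    using finite_Ebar[OF g Nin_subset Nout_subset] .
  show "(\<lambda>(x, y, z). (x, z)) ` Qk V E k v \<subseteq> Ebar E (Nin V E (k+1) v) (Nout V E 1 v)"
  proof
    fix t assume "t \<in> (\<lambda>(x, y, z). (x, z)) ` Qk V E k v"
    then obtain x z ws where t: "t = (x, z)" and l: "length ws = k" and s: "shortest_induced_path V E (x # ws @ [v, z])"
      unfolding Qk_def by auto
    show "t \<in> Ebar E (Nin V E (k+1) v) (Nout V E 1 v)"
      using t sip_tail_triple[OF s l g] by (simp add: Ebar_iff Nin_iff_Nout)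
  qed
qed

lemma card_Rk:
  assumes g: "digraph V E" and k: "1 \<le> k"
  shows "card (Rk V E k v) \<le> card (Ebar E (Nin V E 1 v) (Nin V E (k+2) v))"
proof (rule card_inj_on_le[where f = "\<lambda>(x, y, z). (y, x)"])
  show "inj_on (\<lambda>(x, y, z). (y, x)) (Rk V E k v)" unfolding inj_on_def Rk_def by auto
  show "finite (Ebar E (Nin V E 1 v) (Nin V E (k+2) v))"
    using finite_Ebar[OF g Nin_subset Nin_subset] .
  show "(\<lambda>(x, y, z). (y, x)) ` Rk V E k v \<subseteq> Ebar E (Nin V E 1 v) (Nin V E (k+2) v)"
  proof
    fix t assume "t \<in> (\<lambda>(x, y, z). (y, x)) ` Rk V E k v"
    then obtain x y ws where t: "t = (y, x)" and l: "length ws = k" and s: "shortest_induced_path V E (x # ws @ [y, v])"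
      unfolding Rk_def by auto
    show "t \<in> Ebar E (Nin V E 1 v) (Nin V E (k+2) v)"
      using t sip_tail_triple[OF s l g] k by (auto simp: Ebar_iff Nin_iff_Nout intro: nonadjacent_sym)
  qed
qed

lemma card_Pk':
  assumes g: "digraph V E" and k: "1 \<le> k"
  shows "card (Pk' V E k v) \<le> card (Ebar E (Nout V E 1 v) (Nout V E (k+2) v))"
proof (rule card_inj_on_le[where f = "\<lambda>(x, y, z). (y, z)"])
  show "inj_on (\<lambda>(x, y, z). (y, z)) (Pk' V E k v)" unfolding inj_on_def Pk'_def by auto
  show "finite (Ebar E (Nout V E 1 v) (Nout V E (k+2) v))"
    using finite_Ebar[OF g Nout_subset Nout_subset] .
  show "(\<lambda>(x, y, z). (y, z)) ` Pk' V E k v \<subseteq> Ebar E (Nout V E 1 v) (Nout V E (k+2) v)"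
  proof
    fix t assume "t \<in> (\<lambda>(x, y, z). (y, z)) ` Pk' V E k v"
    then obtain y z ws where t: "t = (y, z)" and l: "length ws = k" and s: "shortest_induced_path V E (v # y # ws @ [z])"
      unfolding Pk'_def by auto
    show "t \<in> Ebar E (Nout V E 1 v) (Nout V E (k+2) v)"
      using t sip_head_triple[OF s l g] k by (simp add: Ebar_iff)
  qed
qed

lemma card_Qk':
  assumes g: "digraph V E"
  shows "card (Qk' V E k v) \<le> card (Ebar E (Nout V E (k+1) v) (Nin V E 1 v))"
proof (rule card_inj_on_le[where f = "\<lambda>(x, y, z). (z, x)"])
  show "inj_on (\<lambda>(x, y, z). (z, x)) (Qk' V E k v)" unfolding inj_on_def Qk'_def by auto
  show "finite (Ebar E (Nout V E (k+1) v) (Nin V E 1 v))"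
    using finite_Ebar[OF g Nout_subset Nin_subset] .
  show "(\<lambda>(x, y, z). (z, x)) ` Qk' V E k v \<subseteq> Ebar E (Nout V E (k+1) v) (Nin V E 1 v)"
  proof
    fix t assume "t \<in> (\<lambda>(x, y, z). (z, x)) ` Qk' V E k v"
    then obtain x z ws where t: "t = (z, x)" and l: "length ws = k" and s: "shortest_induced_path V E (x # v # ws @ [z])"
      unfolding Qk'_def by auto
    show "t \<in> Ebar E (Nout V E (k+1) v) (Nin V E 1 v)"
      using t sip_head_triple[OF s l g] by (auto simp: Ebar_iff Nin_iff_Nout intro: nonadjacent_sym)
  qed
qed

theorem lemma2p3:
  fixes V :: "'a set" and E :: "('a \<times> 'a) set" and m k :: nat and v :: 'a
  assumes "m \<ge> 4" and "digraph V E" and "m_free m V E"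
    and "v \<in> V" and "1 \<le> k" and "k \<le> m - 3"
  shows "card (Pk V E k v) = card (Eset E (Nout V E (k+1) v) (Nout V E (k+2) v))
       \<and> card (Qk V E k v) \<le> card (Ebar E (Nin V E (k+1) v) (Nout V E 1 v))
       \<and> card (Rk V E k v) \<le> card (Ebar E (Nin V E 1 v) (Nin V E (k+2) v))
       \<and> card (Pk' V E k v) \<le> card (Ebar E (Nout V E 1 v) (Nout V E (k+2) v))
       \<and> card (Qk' V E k v) \<le> card (Ebar E (Nout V E (k+1) v) (Nin V E 1 v))
       \<and> card (Rk' V E k v) = card (Eset E (Nin V E (k+2) v) (Nin V E (k+1) v))"
proof -
  have km: "k + 3 \<le> m" using assms(1,6) by linarith
  show ?thesis
    using card_Pk[OF assms(2,3) km] card_Qk[OF assms(2)] card_Rk[OF assms(2,5)]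
      card_Pk'[OF assms(2,5)] card_Qk'[OF assms(2)] card_Rk'[OF assms(2,3) km]
    by blast
qed

end
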